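(* Let $m,n\ge0$, $0\le k\le\min(m,n)$, and let $i,j$ be integers with $0\le i\le m$, $0\le j\le n$ and $k<i+j\le m+n-k$. Then $$c_{m,n,k}(i,j)=c_{m,n,k}(i,j-1)+c_{m,n,k}(i-1,j),$$ with the convention that $c_{m,n,k}(a,b)=0$ whenever $(a,b)$ does not satisfy $0\le a\le m$, $0\le b\le n$, $k\le a+b\le m+n-k$.
   Context: Let $e,f,h$ be the standard basis of $\mathfrak{sl}(2,\mathbb{C})$. $V(n)$ is the irreducible representation of highest weight $n$ with fixed highest weight vector $\phi_n$; $\{f^i\phi_n\}_{0\le i\le n}$ is a basis, $f^{n+1}\phi_n=0$. $\mathfrak{sl}(2)$ acts on $V(m)\otimes V(n)$ by $X(v\otimes w)=Xv\otimes w+v\otimes Xw$. For $0\le k\le\min(m,n)$, $\phi_{m,n,k}=\sum_{l=0}^{k}(-1)^l\binom{m-l}{k-l}\binom{n-k+l}{l} f^l\phi_m\otimes f^{k-l}\phi_n$ (a highest weight vector of weight $m+n-2k$). The coordinates $c_{m,n,k}(i,j)$ are defined by $f^{p-k}\phi_{m,n,k}=\sum_{i+j=p,\,0\le i\le m,\,0\le j\le n} c_{m,n,k}(i,j)\, f^i\phi_m\otimes f^j\phi_n$ for $k\le p\le m+n-k$. *)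

theory Defs
  imports Complex_Main
begin

text \<open>Vectors of V(m) (x) V(n) are represented by their coordinates in the basis
  f^i phi_m (x) f^j phi_n, i.e. as functions on pairs (i,j) (only 0<=i<=m, 0<=j<=n matter).
  The action of f is f(v (x) w) = f v (x) w + v (x) f w, with f^(m+1) phi_m = 0 and
  f^(n+1) phi_n = 0; in coordinates it reads as follows.\<close>

definition f_tensor :: "nat \<Rightarrow> nat \<Rightarrow> (nat \<times> nat \<Rightarrow> complex) \<Rightarrow> (nat \<times> nat \<Rightarrow> complex)" where
  "f_tensor m n w = (\<lambda>(i, j).
     (if 1 \<le> i \<and> i \<le> m \<and> j \<le> n then w (i - 1, j) else 0) +
     (if 1 \<le> j \<and> j \<le> n \<and> i \<le> m then w (i, j - 1) else 0))"

definition phi_mnk :: "nat \<Rightarrow> nat \<Rightarrow> nat \<Rightarrow> (nat \<times> nat \<Rightarrow> complex)" where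
  "phi_mnk m n k = (\<lambda>(i, j).
     if i \<le> k \<and> i + j = k \<and> i \<le> m \<and> j \<le> n
     then (-1::complex) ^ i * of_nat ((m - i) choose (k - i)) * of_nat ((n - k + i) choose i)
     else 0)"

definition c_coord :: "nat \<Rightarrow> nat \<Rightarrow> nat \<Rightarrow> int \<Rightarrow> int \<Rightarrow> complex" where
  "c_coord m n k a b =
     (if 0 \<le> a \<and> a \<le> int m \<and> 0 \<le> b \<and> b \<le> int n \<and> int k \<le> a + b \<and> a + b \<le> int m + int n - int k
      then ((f_tensor m n ^^ nat (a + b - int k)) (phi_mnk m n k)) (nat a, nat b)
      else 0)"

end

theory Submission
  imports Defs
begin

text \<open>Inside the range, c_{m,n,k}(i,j) is a coordinate of f applied to the vector one level
  lower, and the coordinate formula of f on V(m) (x) V(n) is exactly the claimed recurrence; the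
  zero convention matches the cut-offs i \<ge> 1 and j \<ge> 1 in that formula.\<close>

lemma f_tensor_apply:
  "f_tensor m n w (i, j) =
     (if 1 \<le> i \<and> i \<le> m \<and> j \<le> n then w (i - 1, j) else 0) +
     (if 1 \<le> j \<and> j \<le> n \<and> i \<le> m then w (i, j - 1) else 0)"
  by (simp add: f_tensor_def)

lemma c_coord_in_range:
  assumes "0 \<le> a" "a \<le> int m" "0 \<le> b" "b \<le> int n"
    and "int k \<le> a + b" "a + b \<le> int m + int n - int k"
  shows "c_coord m n k a b = ((f_tensor m n ^^ nat (a + b - int k)) (phi_mnk m n k)) (nat a, nat b)"
  using assms by (simp add: c_coord_def)

lemma c_coord_neg_fst: "a < 0 \<Longrightarrow> c_coord m n k a b = 0"
  by (simp add: c_coord_def)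

lemma c_coord_neg_snd: "b < 0 \<Longrightarrow> c_coord m n k a b = 0"
  by (simp add: c_coord_def)

theorem proposition7p1:
  fixes m n k :: nat and i j :: int
  assumes "k \<le> min m n"
    and "0 \<le> i" and "i \<le> int m" and "0 \<le> j" and "j \<le> int n"
    and "int k < i + j" and "i + j \<le> int m + int n - int k"
  shows "c_coord m n k i j = c_coord m n k i (j - 1) + c_coord m n k (i - 1) j"
proof -
  define w where "w = (f_tensor m n ^^ nat (i + j - 1 - int k)) (phi_mnk m n k)"
  have level: "nat (i + j - int k) = Suc (nat (i + j - 1 - int k))"
    using assms by simp
  have "c_coord m n k i j = f_tensor m n w (nat i, nat j)"
    using assms by (simp add: c_coord_in_range level w_def)
  moreover have "c_coord m n k (i - 1) j = (if 1 \<le> nat i then w (nat i - 1, nat j) else 0)"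
    using assms c_coord_in_range[of "i - 1" m j n k] c_coord_neg_fst[of "i - 1"]
    by (cases "1 \<le> i") (auto simp: w_def nat_diff_distrib algebra_simps)
  moreover have "c_coord m n k i (j - 1) = (if 1 \<le> nat j then w (nat i, nat j - 1) else 0)"
    using assms c_coord_in_range[of i m "j - 1" n k] c_coord_neg_snd[of "j - 1"]
    by (cases "1 \<le> j") (auto simp: w_def nat_diff_distrib algebra_simps)
  ultimately show ?thesis
    using assms by (simp add: f_tensor_apply nat_le_iff)
qed

end
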